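(* Let $(Q,P)$ be a weakly quasi-lattice ordered group and let $\Lambda$ be a $P$-graph with $\mathrm{FA}(\Lambda)\neq\emptyset$. For $\mu,\nu\in\mathrm{FA}(\Lambda)$ and finite $J,K\subseteq\Lambda$, let $$Z(\mu\setminus J,\nu\setminus K)=\{(x,d(\mu)d(\nu)^{-1},y)\in\mathcal{G}(\Lambda): \mu\in x,\ x\cap J=\emptyset,\ \nu\in y,\ y\cap K=\emptyset,\ x\cdot d(\mu)=y\cdot d(\nu)\}.$$ The collection of all such sets, where $\mu,\nu\in\mathrm{FA}(\Lambda)$ and $J,K$ are finite subsets of $\Lambda$, is a basis for the topology on $\mathcal{G}(\Lambda)$.
   Context: $(Q,P)$ weakly quasi-lattice ordered: $Q$ a discrete group, $P\subseteq Q$ a subsemigroup containing the identity $e$ with $P\cap P^{-1}=\{e\}$, and, with $p\le r$ meaning $pq=r$ for some $q\in P$, any two elements of $P$ with a common upper bound have a least common upper bound. A $P$-graph is a countable small category $\Lambda$ (range/source $r,s$) with a functor $d:\Lambda\to P$ with unique factorisation (if $d(\lambda)=pq$ there are unique $\mu,\nu$ with $\lambda=\mu\nu$, $d(\mu)=p$, $d(\nu)=q$). Write $\Lambda^m=d^{-1}(m)$, $\lambda\Lambda=\{\lambda\mu: s(\lambda)=r(\mu)\}$, $\mu\preceq\lambda$ iff $\lambda\in\mu\Lambda$. $\mathrm{FA}(\Lambda)$ is the set of $\lambda$ such that for all $\mu\in\lambda\Lambda,\nu\in\Lambda$ there is finite $J\subseteq\Lambda$ with $\mu\Lambda\cap\nu\Lambda=\bigcup_{\kappa\in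 J}\kappa\Lambda$. A filter is a nonempty hereditary and directed subset of $\Lambda$ (w.r.t. $\preceq$). $\mathcal{P}(\Lambda)$ has the product topology from $\{0,1\}^\Lambda$ (basis $\{x: K_1\subseteq x\subseteq\Lambda\setminus K_2\}$, $K_1,K_2$ finite); subsets have the subspace topology. Path space $\mathcal{X}(\Lambda)=\{x\text{ filter}: x\cap\mathrm{FA}(\Lambda)\neq\emptyset\}$. For $x\in\mathcal{X}(\Lambda)$, $m\in P$ with $x\cap\Lambda^m\neq\emptyset$ (write $x\in\mathrm{dom}(m)$), $x(0,m)$ is the unique element of $x\cap\Lambda^m$ and $x\cdot m=\{\mu: x(0,m)\mu\in x\}$. The path groupoid $\mathcal{G}(\Lambda)$ is the set of $(x,q,y)\in\mathcal{X}(\Lambda)\times Q\times\mathcal{X}(\Lambda)$ such that $q=mn^{-1}$, $x\in\mathrm{dom}(m)$, $y\in\mathrm{dom}(n)$, $x\cdot m=y\cdot n$ for some $m,n\in P$, with product $(x,q,y)(y,r,z)=(x,qr,z)$, inverse $(y,q^{-1},x)$, and the topology generated by the basis of sets $\{(x,mn^{-1},y)\in\mathcal{G}(\Lambda): x\in U,\ y\in V,\ x\in\mathrm{dom}(m),\ y\in\mathrm{dom}(n),\ x\cdot m=y\cdot n\}$ for $m,n\in P$ and $U,V\subseteq\mathcal{X}(\Lambda)$ open. *)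

theory Defs
  imports "HOL-Analysis.Analysis"
begin

text \<open>The discrete group Q is a type of class group_add; the group operation
  is written additively (not assumed commutative): pq is p + q, q^-1 is -q,
  and m n^-1 is m - n. The identity e is 0.\<close>

definition pleq :: "'q::group_add set \<Rightarrow> 'q \<Rightarrow> 'q \<Rightarrow> bool" where
  "pleq P p r \<longleftrightarrow> (\<exists>q\<in>P. p + q = r)"

definition wqlo :: "'q::group_add set \<Rightarrow> bool" where
  "wqlo P \<longleftrightarrow> 0 \<in> P \<and> (\<forall>p\<in>P. \<forall>q\<in>P. p + q \<in> P) \<and> P \<inter> uminus ` P = {0} \<and>
     (\<forall>p\<in>P. \<forall>q\<in>P. (\<exists>u\<in>P. pleq P p u \<and> pleq P q u) \<longrightarrow>
        (\<exists>l\<in>P. pleq P p l \<and> pleq P q l \<and> (\<forall>u\<in>P. pleq P p u \<and> pleq P q u \<longrightarrow> pleq P l u)))"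

record ('a, 'o, 'q) pgraph =
  Mor :: "'a set"
  Obj :: "'o set"
  src :: "'a \<Rightarrow> 'o"
  rng :: "'a \<Rightarrow> 'o"
  idm :: "'o \<Rightarrow> 'a"
  comp :: "'a \<Rightarrow> 'a \<Rightarrow> 'a"
  deg :: "'a \<Rightarrow> 'q"

definition is_pgraph :: "'q::group_add set \<Rightarrow> ('a, 'o, 'q) pgraph \<Rightarrow> bool" where
  "is_pgraph P L \<longleftrightarrow>
     countable (Mor L) \<and> countable (Obj L) \<and>
     (\<forall>v\<in>Obj L. idm L v \<in> Mor L \<and> src L (idm L v) = v \<and> rng L (idm L v) = v) \<and>
     (\<forall>a\<in>Mor L. src L a \<in> Obj L \<and> rng L a \<in> Obj L) \<and>
     (\<forall>a\<in>Mor L. \<forall>b\<in>Mor L. src L a = rng L b \<longrightarrow>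
         comp L a b \<in> Mor L \<and> rng L (comp L a b) = rng L a \<and> src L (comp L a b) = src L b) \<and>
     (\<forall>a\<in>Mor L. \<forall>b\<in>Mor L. \<forall>c\<in>Mor L. src L a = rng L b \<and> src L b = rng L c \<longrightarrow>
         comp L (comp L a b) c = comp L a (comp L b c)) \<and>
     (\<forall>a\<in>Mor L. comp L (idm L (rng L a)) a = a \<and> comp L a (idm L (src L a)) = a) \<and>
     (\<forall>a\<in>Mor L. deg L a \<in> P) \<and>
     (\<forall>v\<in>Obj L. deg L (idm L v) = 0) \<and>
     (\<forall>a\<in>Mor L. \<forall>b\<in>Mor L. src L a = rng L b \<longrightarrow> deg L (comp L a b) = deg L a + deg L b) \<and>
     (\<forall>a\<in>Mor L. \<forall>p\<in>P. \<forall>q\<in>P. deg L a = p + q \<longrightarrow>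
         (\<exists>!(b, c). b \<in> Mor L \<and> c \<in> Mor L \<and> src L b = rng L c \<and> a = comp L b c \<and>
                   deg L b = p \<and> deg L c = q))"

definition ext :: "('a, 'o, 'q) pgraph \<Rightarrow> 'a \<Rightarrow> 'a set" where
  "ext L a = {comp L a b | b. b \<in> Mor L \<and> src L a = rng L b}"

definition prec :: "('a, 'o, 'q) pgraph \<Rightarrow> 'a \<Rightarrow> 'a \<Rightarrow> bool" where
  "prec L m l \<longleftrightarrow> m \<in> Mor L \<and> l \<in> ext L m"

definition FA :: "('a, 'o, 'q) pgraph \<Rightarrow> 'a set" where
  "FA L = {l \<in> Mor L. \<forall>m\<in>ext L l. \<forall>n\<in>Mor L. \<exists>J. finite J \<and> J \<subseteq> Mor L \<and>
              ext L m \<inter> ext L n = (\<Union>k\<in>J. ext L k)}"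

definition is_filter :: "('a, 'o, 'q) pgraph \<Rightarrow> 'a set \<Rightarrow> bool" where
  "is_filter L x \<longleftrightarrow> x \<subseteq> Mor L \<and> x \<noteq> {} \<and>
     (\<forall>l\<in>x. \<forall>m. prec L m l \<longrightarrow> m \<in> x) \<and>
     (\<forall>l\<in>x. \<forall>m\<in>x. \<exists>n\<in>x. prec L l n \<and> prec L m n)"

definition pathsp :: "('a, 'o, 'q) pgraph \<Rightarrow> 'a set set" where
  "pathsp L = {x. is_filter L x \<and> x \<inter> FA L \<noteq> {}}"

definition indom :: "('a, 'o, 'q) pgraph \<Rightarrow> 'a set \<Rightarrow> 'q \<Rightarrow> bool" where
  "indom L x m \<longleftrightarrow> (\<exists>l\<in>x. deg L l = m)"

definition seg :: "('a, 'o, 'q) pgraph \<Rightarrow> 'a set \<Rightarrow> 'q \<Rightarrow> 'a" where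
  "seg L x m = (THE l. l \<in> x \<and> deg L l = m)"

definition shift :: "('a, 'o, 'q) pgraph \<Rightarrow> 'a set \<Rightarrow> 'q \<Rightarrow> 'a set" where
  "shift L x m = {b \<in> Mor L. src L (seg L x m) = rng L b \<and> comp L (seg L x m) b \<in> x}"

definition groupoid :: "'q::group_add set \<Rightarrow> ('a, 'o, 'q) pgraph \<Rightarrow> ('a set \<times> 'q \<times> 'a set) set" where
  "groupoid P L = {(x, q, y). x \<in> pathsp L \<and> y \<in> pathsp L \<and>
     (\<exists>m\<in>P. \<exists>n\<in>P. q = m - n \<and> indom L x m \<and> indom L y n \<and> shift L x m = shift L y n)}"

text \<open>Product topology on P(\<Lambda>) = {0,1}^\<Lambda>, via its standard basis.\<close>
definition powtop :: "('a, 'o, 'q) pgraph \<Rightarrow> 'a set topology" where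
  "powtop L = topology_generated_by
     {{x. x \<subseteq> Mor L \<and> K1 \<subseteq> x \<and> x \<subseteq> Mor L - K2} | K1 K2.
        finite K1 \<and> finite K2 \<and> K1 \<subseteq> Mor L \<and> K2 \<subseteq> Mor L}"

definition pathtop :: "('a, 'o, 'q) pgraph \<Rightarrow> 'a set topology" where
  "pathtop L = subtopology (powtop L) (pathsp L)"

definition gtop :: "'q::group_add set \<Rightarrow> ('a, 'o, 'q) pgraph \<Rightarrow> ('a set \<times> 'q \<times> 'a set) topology" where
  "gtop P L = topology_generated_by
     {{(x, m - n, y) | x y. (x, m - n, y) \<in> groupoid P L \<and> x \<in> U \<and> y \<in> V \<and>
          indom L x m \<and> indom L y n \<and> shift L x m = shift L y n} | m n U V.
        m \<in> P \<and> n \<in> P \<and> openin (pathtop L) U \<and> openin (pathtop L) V}"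

definition Zset :: "'q::group_add set \<Rightarrow> ('a, 'o, 'q) pgraph \<Rightarrow> 'a \<Rightarrow> 'a set \<Rightarrow> 'a \<Rightarrow> 'a set
                     \<Rightarrow> ('a set \<times> 'q \<times> 'a set) set" where
  "Zset P L mu J nu K = {(x, deg L mu - deg L nu, y) | x y.
      (x, deg L mu - deg L nu, y) \<in> groupoid P L \<and> mu \<in> x \<and> x \<inter> J = {} \<and> nu \<in> y \<and> y \<inter> K = {} \<and>
      shift L x (deg L mu) = shift L y (deg L nu)}"

definition is_basis_for :: "'b topology \<Rightarrow> 'b set set \<Rightarrow> bool" where
  "is_basis_for T B \<longleftrightarrow> (\<forall>b\<in>B. openin T b) \<and>
     (\<forall>W. openin T W \<longrightarrow> (\<exists>C\<subseteq>B. \<Union>C = W))"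

end

(* Each Z(mu\J, nu\K) is itself one of the generating sets of the groupoid topology: take
   m = d(mu), n = d(nu) and the path-space neighbourhoods {x. mu in x, x disjoint from J} and
   {y. nu in y, y disjoint from K}.

   Conversely, let (x, m n^-1, y) lie in a generating set, so x.m = y.n. Whenever mu a is in x and
   nu a is in y, x.d(mu a) = y.d(nu a) holds iff x.d(mu) = y.d(nu); hence one may extend
   x(0,m) and y(0,n) by a common tail a, chosen (using directedness of x and y) so that
   mu = x(0,m) a and nu = y(0,n) a dominate an element of FA and the finite sets cutting out
   cylinder neighbourhoods of x and y inside U and V. Then Z(mu\J, nu\K) is a neighbourhood of
   the point inside the generating set. Two Z-sets around the same point are refined in the same
   way along a common extension of mu1 and mu2 in x, where unique factorisation in the filter y
   forces the corresponding extensions of nu1 and nu2 to agree. *)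

theory Submission
  imports Defs
begin

section \<open>Paths and filters in a P-graph\<close>

lemma pgraph_comp:
  assumes "is_pgraph P L" "a \<in> Mor L" "b \<in> Mor L" "src L a = rng L b"
  shows "comp L a b \<in> Mor L" "rng L (comp L a b) = rng L a" "src L (comp L a b) = src L b"
    "deg L (comp L a b) = deg L a + deg L b"
  using assms unfolding is_pgraph_def by simp_all

lemma pgraph_assoc:
  assumes "is_pgraph P L" "a \<in> Mor L" "b \<in> Mor L" "c \<in> Mor L"
    "src L a = rng L b" "src L b = rng L c"
  shows "comp L (comp L a b) c = comp L a (comp L b c)"
  using assms unfolding is_pgraph_def by simp

lemma pgraph_deg_in: "is_pgraph P L \<Longrightarrow> a \<in> Mor L \<Longrightarrow> deg L a \<in> P"
  unfolding is_pgraph_def by simp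

lemma pgraph_factorisation_unique:
  assumes G: "is_pgraph P L" and "b \<in> Mor L" "c \<in> Mor L" "b' \<in> Mor L" "c' \<in> Mor L"
    and "src L b = rng L c" "src L b' = rng L c'"
    and "comp L b c = comp L b' c'" and "deg L b = deg L b'"
  shows "b = b'" "c = c'"
proof -
  let ?a = "comp L b c"
  have "deg L ?a = deg L b + deg L c" "deg L ?a = deg L b' + deg L c'"
    using pgraph_comp(4)[OF G] assms by metis+
  then have "deg L c = deg L c'"
    using \<open>deg L b = deg L b'\<close> by simp
  have "\<forall>a\<in>Mor L. \<forall>p\<in>P. \<forall>q\<in>P. deg L a = p + q \<longrightarrow>
         (\<exists>!(b, c). b \<in> Mor L \<and> c \<in> Mor L \<and> src L b = rng L c \<and> a = comp L b c \<and>
                   deg L b = p \<and> deg L c = q)"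
    using G unfolding is_pgraph_def by simp
  then have "\<exists>!(b0, c0). b0 \<in> Mor L \<and> c0 \<in> Mor L \<and> src L b0 = rng L c0 \<and> ?a = comp L b0 c0 \<and>
               deg L b0 = deg L b \<and> deg L c0 = deg L c"
    using pgraph_comp(1)[OF G] pgraph_deg_in[OF G] assms \<open>deg L ?a = deg L b + deg L c\<close> by blast
  then have "(b, c) = (b', c')"
    using assms \<open>deg L c = deg L c'\<close> unfolding Ex1_def by (smt (verit) case_prod_conv)
  then show "b = b'" "c = c'" by simp_all
qed

lemma precE:
  assumes "prec L m l"
  obtains b where "m \<in> Mor L" "b \<in> Mor L" "src L m = rng L b" "l = comp L m b"
  using assms unfolding prec_def ext_def by blast

lemma precI: "m \<in> Mor L \<Longrightarrow> b \<in> Mor L \<Longrightarrow> src L m = rng L b \<Longrightarrow> prec L m (comp L m b)"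
  unfolding prec_def ext_def by blast

lemma ext_antimono:
  assumes G: "is_pgraph P L" and "prec L m l"
  shows "ext L l \<subseteq> ext L m"
proof
  fix k assume "k \<in> ext L l"
  then obtain c where c: "c \<in> Mor L" "src L l = rng L c" "k = comp L l c"
    unfolding ext_def by blast
  obtain b where b: "m \<in> Mor L" "b \<in> Mor L" "src L m = rng L b" "l = comp L m b"
    using \<open>prec L m l\<close> by (rule precE)
  have "src L b = rng L c"
    using c b pgraph_comp(3)[OF G, of m b] by simp
  then have "k = comp L m (comp L b c)" "comp L b c \<in> Mor L" "src L m = rng L (comp L b c)"
    using pgraph_assoc[OF G b(1,2) c(1) b(3)] pgraph_comp(1,2)[OF G b(2) c(1)] b c by simp_all
  then show "k \<in> ext L m"
    unfolding ext_def by blast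
qed

lemma prec_trans:
  assumes G: "is_pgraph P L" and "prec L m l" "prec L l k"
  shows "prec L m k"
  using ext_antimono[OF G \<open>prec L m l\<close>] assms(2,3) unfolding prec_def by blast

lemma FA_subset_Mor: "FA L \<subseteq> Mor L"
  unfolding FA_def by blast

lemma FA_prec_closed:
  assumes G: "is_pgraph P L" and "l \<in> FA L" "prec L l l'"
  shows "l' \<in> FA L"
proof -
  have "l' \<in> Mor L"
    using \<open>prec L l l'\<close> by (elim precE) (simp add: pgraph_comp(1)[OF G])
  then show ?thesis
    using ext_antimono[OF G \<open>prec L l l'\<close>] \<open>l \<in> FA L\<close> unfolding FA_def by blast
qed

lemma filter_Mor: "is_filter L x \<Longrightarrow> l \<in> x \<Longrightarrow> l \<in> Mor L"
  unfolding is_filter_def by blast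

lemma filter_hereditary: "is_filter L x \<Longrightarrow> l \<in> x \<Longrightarrow> prec L m l \<Longrightarrow> m \<in> x"
  unfolding is_filter_def by blast

lemma filter_directed:
  "is_filter L x \<Longrightarrow> l \<in> x \<Longrightarrow> m \<in> x \<Longrightarrow> \<exists>n\<in>x. prec L l n \<and> prec L m n"
  unfolding is_filter_def by blast

lemma filter_finite_upper_bound:
  assumes G: "is_pgraph P L" and F: "is_filter L x" and "finite S" "S \<subseteq> x"
  shows "\<exists>u\<in>x. \<forall>f\<in>S. prec L f u"
  using assms(3,4)
proof (induction S rule: finite_induct)
  case empty
  then show ?case
    using F unfolding is_filter_def by blast
next
  case (insert f S)
  then obtain u where "u \<in> x" "\<forall>g\<in>S. prec L g u"
    by blast
  moreover obtain n where "n \<in> x" "prec L u n" "prec L f n"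
    using filter_directed[OF F \<open>u \<in> x\<close>] insert.prems by blast
  ultimately show ?case
    using prec_trans[OF G] by blast
qed

lemma filter_deg_unique:
  assumes G: "is_pgraph P L" and F: "is_filter L x"
    and "l \<in> x" "l' \<in> x" "deg L l = deg L l'"
  shows "l = l'"
proof -
  obtain n where "prec L l n" "prec L l' n"
    using filter_directed[OF F \<open>l \<in> x\<close> \<open>l' \<in> x\<close>] by blast
  then obtain b b' where "l \<in> Mor L" "b \<in> Mor L" "src L l = rng L b" "n = comp L l b"
    and "l' \<in> Mor L" "b' \<in> Mor L" "src L l' = rng L b'" "n = comp L l' b'"
    by (meson precE)
  then show ?thesis
    using pgraph_factorisation_unique(1)[OF G] \<open>deg L l = deg L l'\<close> by simp
qed

section \<open>Shifts of filters\<close>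

lemma mem_shift_iff:
  assumes G: "is_pgraph P L" and F: "is_filter L x" and "l \<in> x"
  shows "b \<in> shift L x (deg L l) \<longleftrightarrow> b \<in> Mor L \<and> src L l = rng L b \<and> comp L l b \<in> x"
proof -
  have "seg L x (deg L l) = l"
    unfolding seg_def using filter_deg_unique[OF G F] \<open>l \<in> x\<close> by (intro the_equality) auto
  then show ?thesis
    unfolding shift_def by simp
qed

lemma filter_shift_upper_bound:
  assumes G: "is_pgraph P L" and F: "is_filter L x" and "mu \<in> x" "finite S" "S \<subseteq> x"
  obtains a where "a \<in> shift L x (deg L mu)" "\<forall>f\<in>S. prec L f (comp L mu a)"
proof -
  obtain w where "w \<in> x" "\<forall>f\<in>insert mu S. prec L f w"
    using filter_finite_upper_bound[OF G F, of "insert mu S"] assms by auto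
  moreover from this obtain a where "a \<in> Mor L" "src L mu = rng L a" "w = comp L mu a"
    by (meson insertI1 precE)
  ultimately show ?thesis
    using that mem_shift_iff[OF G F \<open>mu \<in> x\<close>] by blast
qed

lemma shift_comp:
  assumes G: "is_pgraph P L" and F: "is_filter L x" and "mu \<in> x"
    and a: "a \<in> Mor L" "src L mu = rng L a" and "comp L mu a \<in> x"
  shows "shift L x (deg L (comp L mu a)) =
    {b \<in> Mor L. src L a = rng L b \<and> comp L a b \<in> shift L x (deg L mu)}"
proof -
  have mu: "mu \<in> Mor L"
    using filter_Mor[OF F \<open>mu \<in> x\<close>] .
  have src_mu_a: "src L (comp L mu a) = src L a"
    using pgraph_comp(3)[OF G mu a] .
  have "b \<in> shift L x (deg L (comp L mu a)) \<longleftrightarrow>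
        b \<in> Mor L \<and> src L a = rng L b \<and> comp L a b \<in> shift L x (deg L mu)" for b
  proof (cases "b \<in> Mor L \<and> src L a = rng L b")
    case True
    then have "comp L (comp L mu a) b = comp L mu (comp L a b)"
      "comp L a b \<in> Mor L" "rng L (comp L a b) = rng L a"
      using pgraph_assoc[OF G mu a(1) _ a(2)] pgraph_comp(1,2)[OF G a(1)] by simp_all
    then show ?thesis
      using mem_shift_iff[OF G F \<open>comp L mu a \<in> x\<close>] mem_shift_iff[OF G F \<open>mu \<in> x\<close>]
        src_mu_a a(2) True by simp
  next
    case False
    then show ?thesis
      using mem_shift_iff[OF G F \<open>comp L mu a \<in> x\<close>] src_mu_a by auto
  qed
  then show ?thesis
    by blast
qed

lemma shift_subset_prefixes:
  assumes G: "is_pgraph P L" and F: "is_filter L x" and "mu \<in> x"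
    and a: "a \<in> Mor L" "src L mu = rng L a" and "comp L mu a \<in> x"
    and "c \<in> shift L x (deg L mu)"
  shows "\<exists>f\<in>shift L x (deg L (comp L mu a)). prec L c (comp L a f)"
proof -
  have mu: "mu \<in> Mor L"
    using filter_Mor[OF F \<open>mu \<in> x\<close>] .
  have c: "c \<in> Mor L" "src L mu = rng L c" "comp L mu c \<in> x"
    using \<open>c \<in> shift L x (deg L mu)\<close> mem_shift_iff[OF G F \<open>mu \<in> x\<close>] by simp_all
  obtain w where "w \<in> x" "prec L (comp L mu c) w" "prec L (comp L mu a) w"
    using filter_directed[OF F c(3) \<open>comp L mu a \<in> x\<close>] by blast
  then obtain e f where e: "e \<in> Mor L" "src L (comp L mu c) = rng L e" "w = comp L (comp L mu c) e"
    and f: "f \<in> Mor L" "src L (comp L mu a) = rng L f" "w = comp L (comp L mu a) f"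
    by (meson precE)
  have ce: "src L c = rng L e" and af: "src L a = rng L f"
    using e(2) f(2) pgraph_comp(3)[OF G mu] c a by simp_all
  have "comp L mu (comp L c e) = comp L mu (comp L a f)"
    using pgraph_assoc[OF G mu c(1) e(1) c(2) ce] pgraph_assoc[OF G mu a(1) f(1) a(2) af] e(3) f(3)
    by simp
  then have "comp L c e = comp L a f"
    using pgraph_factorisation_unique(2)[OF G mu _ mu] pgraph_comp(1,2)[OF G] c a e f ce af
    by simp
  moreover have "f \<in> shift L x (deg L (comp L mu a))"
    using mem_shift_iff[OF G F \<open>comp L mu a \<in> x\<close>] f \<open>w \<in> x\<close> by simp
  ultimately show ?thesis
    using precI[OF c(1) e(1) ce] by auto
qed

lemma prefix_in_shift:
  assumes G: "is_pgraph P L" and F: "is_filter L x" and "mu \<in> x"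
    and a: "a \<in> Mor L" "src L mu = rng L a" and "comp L mu a \<in> x"
    and "f \<in> shift L x (deg L (comp L mu a))" "prec L c (comp L a f)"
  shows "c \<in> shift L x (deg L mu)"
proof -
  have mu: "mu \<in> Mor L"
    using filter_Mor[OF F \<open>mu \<in> x\<close>] .
  have f: "f \<in> Mor L" "src L a = rng L f" "comp L (comp L mu a) f \<in> x"
    using \<open>f \<in> shift L x (deg L (comp L mu a))\<close> mem_shift_iff[OF G F \<open>comp L mu a \<in> x\<close>]
      pgraph_comp(3)[OF G mu a] by simp_all
  obtain e where e: "c \<in> Mor L" "e \<in> Mor L" "src L c = rng L e" "comp L a f = comp L c e"
    using \<open>prec L c (comp L a f)\<close> by (elim precE) simp
  have "rng L c = rng L (comp L a f)"
    using pgraph_comp(2)[OF G e(1-3)] e(4) by simp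
  then have mu_c: "src L mu = rng L c"
    using pgraph_comp(2)[OF G a(1) f(1,2)] a(2) by simp
  have "comp L (comp L mu c) e = comp L (comp L mu a) f"
    using pgraph_assoc[OF G mu e(1,2) mu_c e(3)] pgraph_assoc[OF G mu a(1) f(1) a(2) f(2)] e(4)
    by simp
  moreover have "prec L (comp L mu c) (comp L (comp L mu c) e)"
    using precI pgraph_comp(1,3)[OF G mu e(1) mu_c] e by simp
  ultimately have "comp L mu c \<in> x"
    using filter_hereditary[OF F f(3)] by simp
  then show ?thesis
    using mem_shift_iff[OF G F \<open>mu \<in> x\<close>] e(1) mu_c by simp
qed

text \<open>Recovering x \<cdot> d(\<mu>) from x \<cdot> d(\<mu>a) is where directedness of x and unique
  factorisation are needed.\<close>

lemma shift_eq_prefixes: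
  assumes G: "is_pgraph P L" and F: "is_filter L x" and "mu \<in> x"
    and a: "a \<in> Mor L" "src L mu = rng L a" and "comp L mu a \<in> x"
  shows "shift L x (deg L mu) = {c. \<exists>f\<in>shift L x (deg L (comp L mu a)). prec L c (comp L a f)}"
  using shift_subset_prefixes[OF assms] prefix_in_shift[OF assms] by blast

lemma shift_comp_eq_iff:
  assumes G: "is_pgraph P L" and Fx: "is_filter L x" and Fy: "is_filter L y"
    and "mu \<in> x" "nu \<in> y" and a: "a \<in> Mor L" "src L mu = rng L a" "src L nu = rng L a"
    and "comp L mu a \<in> x" "comp L nu a \<in> y"
  shows "shift L x (deg L (comp L mu a)) = shift L y (deg L (comp L nu a)) \<longleftrightarrow>
    shift L x (deg L mu) = shift L y (deg L nu)"
proof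
  assume "shift L x (deg L (comp L mu a)) = shift L y (deg L (comp L nu a))"
  then show "shift L x (deg L mu) = shift L y (deg L nu)"
    by (simp only: shift_eq_prefixes[OF G Fx \<open>mu \<in> x\<close> a(1,2) \<open>comp L mu a \<in> x\<close>]
        shift_eq_prefixes[OF G Fy \<open>nu \<in> y\<close> a(1,3) \<open>comp L nu a \<in> y\<close>])
next
  assume "shift L x (deg L mu) = shift L y (deg L nu)"
  then show "shift L x (deg L (comp L mu a)) = shift L y (deg L (comp L nu a))"
    by (simp only: shift_comp[OF G Fx \<open>mu \<in> x\<close> a(1,2) \<open>comp L mu a \<in> x\<close>]
        shift_comp[OF G Fy \<open>nu \<in> y\<close> a(1,3) \<open>comp L nu a \<in> y\<close>])
qed

lemma shift_eq_common_extension: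
  assumes G: "is_pgraph P L" and Fx: "is_filter L x" and Fy: "is_filter L y"
    and "mu \<in> x" "nu \<in> y" and sh: "shift L x (deg L mu) = shift L y (deg L nu)"
    and "finite S" "S \<subseteq> x" "finite T" "T \<subseteq> y"
  obtains a where "a \<in> shift L x (deg L mu)"
    "\<forall>f\<in>S. prec L f (comp L mu a)" "\<forall>f\<in>T. prec L f (comp L nu a)"
proof -
  have mu: "mu \<in> Mor L" and nu: "nu \<in> Mor L"
    using filter_Mor[OF Fx \<open>mu \<in> x\<close>] filter_Mor[OF Fy \<open>nu \<in> y\<close>] by simp_all
  obtain a1 where "a1 \<in> shift L y (deg L nu)" and T: "\<forall>f\<in>T. prec L f (comp L nu a1)"
    using filter_shift_upper_bound[OF G Fy \<open>nu \<in> y\<close> \<open>finite T\<close> \<open>T \<subseteq> y\<close>] by blast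
  then have a1: "a1 \<in> Mor L" "src L nu = rng L a1" "a1 \<in> shift L x (deg L mu)"
    using mem_shift_iff[OF G Fy \<open>nu \<in> y\<close>] sh by simp_all
  then have a1x: "src L mu = rng L a1" "comp L mu a1 \<in> x"
    using mem_shift_iff[OF G Fx \<open>mu \<in> x\<close>] by simp_all
  obtain a2 where a2: "a2 \<in> shift L x (deg L (comp L mu a1))"
    and S: "\<forall>f\<in>S. prec L f (comp L (comp L mu a1) a2)"
    using filter_shift_upper_bound[OF G Fx a1x(2) \<open>finite S\<close> \<open>S \<subseteq> x\<close>] by blast
  then have a2': "a2 \<in> Mor L" "src L a1 = rng L a2" "comp L a1 a2 \<in> shift L x (deg L mu)"
    using shift_comp[OF G Fx \<open>mu \<in> x\<close> a1(1) a1x] by simp_all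
  have "comp L (comp L mu a1) a2 = comp L mu (comp L a1 a2)"
    using pgraph_assoc[OF G mu a1(1) a2'(1) a1x(1) a2'(2)] .
  then have "\<forall>f\<in>S. prec L f (comp L mu (comp L a1 a2))"
    using S by simp
  moreover have "prec L (comp L nu a1) (comp L nu (comp L a1 a2))"
    using precI[of "comp L nu a1" L a2] pgraph_comp(1,3)[OF G nu a1(1,2)] a2'(1,2)
      pgraph_assoc[OF G nu a1(1) a2'(1) a1(2) a2'(2)] by simp
  then have "\<forall>f\<in>T. prec L f (comp L nu (comp L a1 a2))"
    using T prec_trans[OF G] by blast
  ultimately show ?thesis
    using that[OF a2'(3)] by blast
qed

section \<open>Refining the sets Zset\<close>

lemma mem_Zset_iff:
  "(x, q, y) \<in> Zset P L mu J nu K \<longleftrightarrow> q = deg L mu - deg L nu \<and> (x, q, y) \<in> groupoid P L \<and>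
     mu \<in> x \<and> x \<inter> J = {} \<and> nu \<in> y \<and> y \<inter> K = {} \<and> shift L x (deg L mu) = shift L y (deg L nu)"
  unfolding Zset_def by auto

lemma groupoid_paths: "(x, q, y) \<in> groupoid P L \<Longrightarrow> x \<in> pathsp L \<and> y \<in> pathsp L"
  unfolding groupoid_def by auto

lemma groupoid_filters: "(x, q, y) \<in> groupoid P L \<Longrightarrow> is_filter L x \<and> is_filter L y"
  using groupoid_paths unfolding pathsp_def by blast

lemma add_right_diff_cancel: "(m + c) - (n + c) = m - (n::'q::group_add)"
  by (simp only: diff_conv_add_uminus minus_add add.assoc add_minus_cancel)

lemma deg_comp_diff:
  assumes G: "is_pgraph P L" and "mu \<in> Mor L" "nu \<in> Mor L"
    and a: "a \<in> Mor L" "src L mu = rng L a" "src L nu = rng L a"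
  shows "deg L (comp L mu a) - deg L (comp L nu a) = deg L mu - deg L nu"
  by (simp only: pgraph_comp(4)[OF G \<open>mu \<in> Mor L\<close> a(1,2)] pgraph_comp(4)[OF G \<open>nu \<in> Mor L\<close> a(1,3)]
      add_right_diff_cancel)

lemma Zset_comp_subset:
  assumes G: "is_pgraph P L" and "mu \<in> Mor L" "nu \<in> Mor L"
    and a: "a \<in> Mor L" "src L mu = rng L a" "src L nu = rng L a"
    and "J \<subseteq> J'" "K \<subseteq> K'"
  shows "Zset P L (comp L mu a) J' (comp L nu a) K' \<subseteq> Zset P L mu J nu K"
proof clarify
  fix x q y
  assume "(x, q, y) \<in> Zset P L (comp L mu a) J' (comp L nu a) K'"
  then have z: "q = deg L (comp L mu a) - deg L (comp L nu a)" "(x, q, y) \<in> groupoid P L"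
    "comp L mu a \<in> x" "x \<inter> J' = {}" "comp L nu a \<in> y" "y \<inter> K' = {}"
    "shift L x (deg L (comp L mu a)) = shift L y (deg L (comp L nu a))"
    unfolding mem_Zset_iff by blast+
  have F: "is_filter L x" "is_filter L y"
    using groupoid_filters[OF z(2)] by simp_all
  have "mu \<in> x" "nu \<in> y"
    using filter_hereditary[OF F(1) z(3) precI[OF assms(2) a(1,2)]]
      filter_hereditary[OF F(2) z(5) precI[OF assms(3) a(1,3)]] by simp_all
  then show "(x, q, y) \<in> Zset P L mu J nu K"
    unfolding mem_Zset_iff
    using z shift_comp_eq_iff[OF G F _ _ a] deg_comp_diff[OF G assms(2,3) a] assms(7,8) by auto
qed

lemma mem_Zset_comp:
  assumes G: "is_pgraph P L" and Z: "(x, q, y) \<in> Zset P L mu J nu K"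
    and a: "a \<in> Mor L" "src L mu = rng L a" "src L nu = rng L a"
    and "comp L mu a \<in> x" "comp L nu a \<in> y" "x \<inter> J' = {}" "y \<inter> K' = {}"
  shows "(x, q, y) \<in> Zset P L (comp L mu a) J' (comp L nu a) K'"
proof -
  have z: "q = deg L mu - deg L nu" "(x, q, y) \<in> groupoid P L" "mu \<in> x" "nu \<in> y"
    "shift L x (deg L mu) = shift L y (deg L nu)"
    using Z unfolding mem_Zset_iff by blast+
  have F: "is_filter L x" "is_filter L y"
    using groupoid_filters[OF z(2)] by simp_all
  have "mu \<in> Mor L" "nu \<in> Mor L"
    using filter_Mor[OF F(1) z(3)] filter_Mor[OF F(2) z(4)] by simp_all
  then show ?thesis
    unfolding mem_Zset_iff
    using z assms(6-9) shift_comp_eq_iff[OF G F z(3,4) a] deg_comp_diff[OF G _ _ a] by simp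
qed

lemma minus_diff_add_add: "n + a = - (m - n) + (m + (a::'q::group_add))"
  by (simp only: minus_diff_eq add.assoc[symmetric] diff_add_cancel)

lemma Zset_extensions_eq:
  assumes G: "is_pgraph P L"
    and Z1: "(x, q, y) \<in> Zset P L mu1 J1 nu1 K1" and Z2: "(x, q, y) \<in> Zset P L mu2 J2 nu2 K2"
    and a1: "a1 \<in> Mor L" "src L mu1 = rng L a1" "src L nu1 = rng L a1" "comp L nu1 a1 \<in> y"
    and a2: "a2 \<in> Mor L" "src L mu2 = rng L a2" "src L nu2 = rng L a2" "comp L nu2 a2 \<in> y"
    and "comp L mu1 a1 = comp L mu2 a2"
  shows "comp L nu1 a1 = comp L nu2 a2"
proof -
  have z: "q = deg L mu1 - deg L nu1" "q = deg L mu2 - deg L nu2" "(x, q, y) \<in> groupoid P L"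
    "mu1 \<in> x" "nu1 \<in> y" "mu2 \<in> x" "nu2 \<in> y"
    using Z1 Z2 unfolding mem_Zset_iff by blast+
  have F: "is_filter L x" "is_filter L y"
    using groupoid_filters[OF z(3)] by simp_all
  have M: "mu1 \<in> Mor L" "nu1 \<in> Mor L" "mu2 \<in> Mor L" "nu2 \<in> Mor L"
    using filter_Mor[OF F(1) z(4)] filter_Mor[OF F(2) z(5)]
      filter_Mor[OF F(1) z(6)] filter_Mor[OF F(2) z(7)] by simp_all
  have "deg L (comp L nu1 a1) = - q + deg L (comp L mu1 a1)"
    using minus_diff_add_add[of "deg L nu1" "deg L a1" "deg L mu1"] z(1)
      pgraph_comp(4)[OF G M(2) a1(1,3)] pgraph_comp(4)[OF G M(1) a1(1,2)] by simp
  also have "\<dots> = deg L (comp L nu2 a2)"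
    using minus_diff_add_add[of "deg L nu2" "deg L a2" "deg L mu2", symmetric] z(2)
      pgraph_comp(4)[OF G M(4) a2(1,3)] pgraph_comp(4)[OF G M(3) a2(1,2)]
      \<open>comp L mu1 a1 = comp L mu2 a2\<close> by simp
  finally show ?thesis
    using filter_deg_unique[OF G F(2) a1(4) a2(4)] by simp
qed

lemma Zset_Int_refine:
  assumes G: "is_pgraph P L"
    and Z1: "(x, q, y) \<in> Zset P L mu1 J1 nu1 K1" and Z2: "(x, q, y) \<in> Zset P L mu2 J2 nu2 K2"
    and "mu1 \<in> FA L" "nu1 \<in> FA L"
  obtains mu nu where "mu \<in> FA L" "nu \<in> FA L" "(x, q, y) \<in> Zset P L mu (J1 \<union> J2) nu (K1 \<union> K2)"
    "Zset P L mu (J1 \<union> J2) nu (K1 \<union> K2) \<subseteq> Zset P L mu1 J1 nu1 K1 \<inter> Zset P L mu2 J2 nu2 K2"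
proof -
  have z1: "(x, q, y) \<in> groupoid P L" "mu1 \<in> x" "x \<inter> J1 = {}" "nu1 \<in> y" "y \<inter> K1 = {}"
    "shift L x (deg L mu1) = shift L y (deg L nu1)"
    using Z1 unfolding mem_Zset_iff by blast+
  have z2: "mu2 \<in> x" "x \<inter> J2 = {}" "nu2 \<in> y" "y \<inter> K2 = {}"
    "shift L x (deg L mu2) = shift L y (deg L nu2)"
    using Z2 unfolding mem_Zset_iff by blast+
  have F: "is_filter L x" "is_filter L y"
    using groupoid_filters[OF z1(1)] by simp_all
  have M: "mu1 \<in> Mor L" "nu1 \<in> Mor L" "mu2 \<in> Mor L" "nu2 \<in> Mor L"
    using filter_Mor[OF F(1) z1(2)] filter_Mor[OF F(2) z1(4)]
      filter_Mor[OF F(1) z2(1)] filter_Mor[OF F(2) z2(3)] by simp_all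
  obtain a1 where a1_shift: "a1 \<in> shift L x (deg L mu1)" and "prec L mu2 (comp L mu1 a1)"
    using filter_shift_upper_bound[OF G F(1) z1(2), of "{mu2}"] z2(1) by auto
  then obtain a2 where a2: "a2 \<in> Mor L" "src L mu2 = rng L a2" "comp L mu1 a1 = comp L mu2 a2"
    by (elim precE) simp
  have "a1 \<in> shift L y (deg L nu1)"
    using a1_shift z1(6) by simp
  then have a1: "a1 \<in> Mor L" "src L mu1 = rng L a1" "comp L mu1 a1 \<in> x"
      "src L nu1 = rng L a1" "comp L nu1 a1 \<in> y"
    using mem_shift_iff[OF G F(1) z1(2)] mem_shift_iff[OF G F(2) z1(4)] a1_shift by simp_all
  have "a2 \<in> shift L y (deg L nu2)"
    using mem_shift_iff[OF G F(1) z2(1)] a1(3) a2 z2(5)[symmetric] by simp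
  then have a2': "src L nu2 = rng L a2" "comp L nu2 a2 \<in> y"
    using mem_shift_iff[OF G F(2) z2(3)] by simp_all
  have nu_eq: "comp L nu1 a1 = comp L nu2 a2"
    using Zset_extensions_eq[OF G Z1 Z2 a1(1,2,4,5) a2(1,2) a2' a2(3)] .
  show ?thesis
  proof (rule that)
    show "comp L mu1 a1 \<in> FA L" "comp L nu1 a1 \<in> FA L"
      using FA_prec_closed[OF G assms(4) precI[OF M(1) a1(1,2)]]
        FA_prec_closed[OF G assms(5) precI[OF M(2) a1(1,4)]] by simp_all
    show "(x, q, y) \<in> Zset P L (comp L mu1 a1) (J1 \<union> J2) (comp L nu1 a1) (K1 \<union> K2)"
      using mem_Zset_comp[OF G Z1 a1(1,2,4,3,5), of "J1 \<union> J2" "K1 \<union> K2"] z1(3,5) z2(2,4) by blast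
    show "Zset P L (comp L mu1 a1) (J1 \<union> J2) (comp L nu1 a1) (K1 \<union> K2) \<subseteq>
        Zset P L mu1 J1 nu1 K1 \<inter> Zset P L mu2 J2 nu2 K2"
      using Zset_comp_subset[OF G M(1,2) a1(1,2,4), of J1 "J1 \<union> J2" K1 "K1 \<union> K2"]
        Zset_comp_subset[OF G M(3,4) a2(1,2) a2'(1), of J2 "J1 \<union> J2" K2 "K1 \<union> K2"]
        a2(3) nu_eq by auto
  qed
qed

section \<open>Bases of generated topologies\<close>

lemma generate_topology_on_local_base:
  assumes "generate_topology_on S W" "x \<in> W"
    and refine: "\<And>s x. s \<in> S \<Longrightarrow> x \<in> s \<Longrightarrow> \<exists>b\<in>B. x \<in> b \<and> b \<subseteq> s"
    and Int_refine: "\<And>b1 b2 x. b1 \<in> B \<Longrightarrow> b2 \<in> B \<Longrightarrow> x \<in> b1 \<Longrightarrow> x \<in> b2 \<Longrightarrow>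
      \<exists>b\<in>B. x \<in> b \<and> b \<subseteq> b1 \<inter> b2"
  shows "\<exists>b\<in>B. x \<in> b \<and> b \<subseteq> W"
  using assms(1,2)
proof (induction arbitrary: x rule: generate_topology_on.induct)
  case Empty
  then show ?case
    by simp
next
  case (Int a b)
  obtain b1 where "b1 \<in> B" "x \<in> b1" "b1 \<subseteq> a"
    using Int.IH(1) Int.prems by blast
  moreover obtain b2 where "b2 \<in> B" "x \<in> b2" "b2 \<subseteq> b"
    using Int.IH(2) Int.prems by blast
  ultimately show ?case
    using Int_refine[of b1 b2 x] by blast
next
  case (UN K)
  then obtain k where "k \<in> K" "x \<in> k"
    by blast
  then obtain b where "b \<in> B" "x \<in> b" "b \<subseteq> k"
    using UN.IH by blast
  then show ?case
    using \<open>k \<in> K\<close> by blast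
next
  case (Basis s)
  then show ?case
    using refine by blast
qed

lemma is_basis_for_topology_generated_by:
  assumes "\<And>b. b \<in> B \<Longrightarrow> openin (topology_generated_by S) b"
    and "\<And>s x. s \<in> S \<Longrightarrow> x \<in> s \<Longrightarrow> \<exists>b\<in>B. x \<in> b \<and> b \<subseteq> s"
    and "\<And>b1 b2 x. b1 \<in> B \<Longrightarrow> b2 \<in> B \<Longrightarrow> x \<in> b1 \<Longrightarrow> x \<in> b2 \<Longrightarrow>
      \<exists>b\<in>B. x \<in> b \<and> b \<subseteq> b1 \<inter> b2"
  shows "is_basis_for (topology_generated_by S) B"
  unfolding is_basis_for_def
proof (intro conjI ballI allI impI)
  fix W
  assume "openin (topology_generated_by S) W"
  then have W: "generate_topology_on S W"
    by (simp add: openin_topology_generated_by_iff)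
  have "W \<subseteq> \<Union>{b \<in> B. b \<subseteq> W}"
  proof
    fix x
    assume "x \<in> W"
    from generate_topology_on_local_base[OF W this assms(2,3)]
    obtain b where "b \<in> B" "x \<in> b" "b \<subseteq> W"
      by blast
    then show "x \<in> \<Union>{b \<in> B. b \<subseteq> W}"
      by blast
  qed
  then show "\<exists>C\<subseteq>B. \<Union>C = W"
    by (intro exI[of _ "{b \<in> B. b \<subseteq> W}"]) blast
qed (rule assms(1))

section \<open>Neighbourhoods in the path space\<close>

definition cylinder :: "('a, 'o, 'q) pgraph \<Rightarrow> 'a set \<Rightarrow> 'a set \<Rightarrow> 'a set set" where
  "cylinder L K1 K2 = {x. x \<subseteq> Mor L \<and> K1 \<subseteq> x \<and> x \<subseteq> Mor L - K2}"

definition cylinders :: "('a, 'o, 'q) pgraph \<Rightarrow> 'a set set set" where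
  "cylinders L = {cylinder L K1 K2 | K1 K2. finite K1 \<and> finite K2 \<and> K1 \<subseteq> Mor L \<and> K2 \<subseteq> Mor L}"

lemma powtop_cylinders: "powtop L = topology_generated_by (cylinders L)"
  unfolding powtop_def cylinders_def cylinder_def ..

lemma cylinder_Int: "cylinder L K1 K2 \<inter> cylinder L K1' K2' = cylinder L (K1 \<union> K1') (K2 \<union> K2')"
  unfolding cylinder_def by auto

lemma cylinders_Int_closed:
  assumes "c1 \<in> cylinders L" "c2 \<in> cylinders L"
  shows "c1 \<inter> c2 \<in> cylinders L"
proof -
  obtain K1 K2 K1' K2' where "c1 \<inter> c2 = cylinder L K1 K2 \<inter> cylinder L K1' K2'"
    and K: "finite K1" "finite K2" "K1 \<subseteq> Mor L" "K2 \<subseteq> Mor L"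
    "finite K1'" "finite K2'" "K1' \<subseteq> Mor L" "K2' \<subseteq> Mor L"
    using assms unfolding cylinders_def by blast
  then have "c1 \<inter> c2 = cylinder L (K1 \<union> K1') (K2 \<union> K2')"
    by (simp add: cylinder_Int)
  then show ?thesis
    unfolding cylinders_def using K by blast
qed

lemma pathsp_subset_Mor: "x \<in> pathsp L \<Longrightarrow> x \<subseteq> Mor L"
  unfolding pathsp_def is_filter_def by simp

lemma pathsp_cylinder: "pathsp L \<inter> cylinder L K1 K2 = {x \<in> pathsp L. K1 \<subseteq> x \<and> x \<inter> K2 = {}}"
  unfolding cylinder_def by (auto dest: pathsp_subset_Mor)

lemma openin_pathtop_cylinder:
  assumes "finite K1" "K1 \<subseteq> Mor L" "finite K2" "K2 \<subseteq> Mor L"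
  shows "openin (pathtop L) {x \<in> pathsp L. K1 \<subseteq> x \<and> x \<inter> K2 = {}}"
proof -
  have "openin (powtop L) (cylinder L K1 K2)"
    unfolding powtop_cylinders cylinders_def using assms by (intro topology_generated_by_Basis) blast
  then show ?thesis
    unfolding pathtop_def pathsp_cylinder[symmetric] by (rule openin_subtopology_Int2)
qed

lemma openin_pathtop_local_cylinder:
  assumes "openin (pathtop L) U" "x \<in> U"
  obtains K1 K2 where "finite K1" "K1 \<subseteq> x" "finite K2" "K2 \<subseteq> Mor L" "x \<inter> K2 = {}"
    "\<And>x'. x' \<in> pathsp L \<Longrightarrow> K1 \<subseteq> x' \<Longrightarrow> x' \<inter> K2 = {} \<Longrightarrow> x' \<in> U"
proof -
  obtain T where T: "openin (powtop L) T" "U = T \<inter> pathsp L"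
    using assms(1) unfolding pathtop_def openin_subtopology by blast
  have "generate_topology_on (cylinders L) T"
    using T(1) unfolding powtop_cylinders openin_topology_generated_by_iff .
  moreover have "x \<in> T"
    using assms(2) T(2) by blast
  ultimately have "\<exists>c\<in>cylinders L. x \<in> c \<and> c \<subseteq> T"
  proof (rule generate_topology_on_local_base)
    show "\<exists>b\<in>cylinders L. y \<in> b \<and> b \<subseteq> c" if "c \<in> cylinders L" "y \<in> c" for c y
      using that by blast
    show "\<exists>b\<in>cylinders L. y \<in> b \<and> b \<subseteq> c1 \<inter> c2"
      if "c1 \<in> cylinders L" "c2 \<in> cylinders L" "y \<in> c1" "y \<in> c2" for c1 c2 y
      using that cylinders_Int_closed by blast
  qed
  then obtain K1 K2 where K: "finite K1" "finite K2" "K2 \<subseteq> Mor L"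
    "x \<in> cylinder L K1 K2" "cylinder L K1 K2 \<subseteq> T"
    unfolding cylinders_def by blast
  show ?thesis
  proof (rule that)
    show "K1 \<subseteq> x" "x \<inter> K2 = {}"
      using K(4) unfolding cylinder_def by blast+
    show "x' \<in> U" if "x' \<in> pathsp L" "K1 \<subseteq> x'" "x' \<inter> K2 = {}" for x'
      using that pathsp_cylinder[of L K1 K2] K(5) T(2) by blast
  qed (use K in simp_all)
qed

section \<open>The groupoid topology\<close>

definition gbasic :: "'q::group_add set \<Rightarrow> ('a, 'o, 'q) pgraph \<Rightarrow> 'q \<Rightarrow> 'q \<Rightarrow> 'a set set \<Rightarrow> 'a set set
    \<Rightarrow> ('a set \<times> 'q \<times> 'a set) set" where
  "gbasic P L m n U V = {(x, m - n, y) | x y. (x, m - n, y) \<in> groupoid P L \<and> x \<in> U \<and> y \<in> V \<and>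
     indom L x m \<and> indom L y n \<and> shift L x m = shift L y n}"

definition gbasics :: "'q::group_add set \<Rightarrow> ('a, 'o, 'q) pgraph \<Rightarrow> ('a set \<times> 'q \<times> 'a set) set set" where
  "gbasics P L = {gbasic P L m n U V | m n U V.
     m \<in> P \<and> n \<in> P \<and> openin (pathtop L) U \<and> openin (pathtop L) V}"

definition Zsets :: "'q::group_add set \<Rightarrow> ('a, 'o, 'q) pgraph \<Rightarrow> ('a set \<times> 'q \<times> 'a set) set set" where
  "Zsets P L = {Zset P L mu J nu K | mu J nu K. mu \<in> FA L \<and> nu \<in> FA L \<and>
     finite J \<and> J \<subseteq> Mor L \<and> finite K \<and> K \<subseteq> Mor L}"

lemma Zset_in_Zsets:
  "mu \<in> FA L \<Longrightarrow> nu \<in> FA L \<Longrightarrow> finite J \<Longrightarrow> J \<subseteq> Mor L \<Longrightarrow> finite K \<Longrightarrow> K \<subseteq> Mor L \<Longrightarrow>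
    Zset P L mu J nu K \<in> Zsets P L"
  unfolding Zsets_def by blast

lemma gtop_gbasics: "gtop P L = topology_generated_by (gbasics P L)"
  unfolding gtop_def gbasics_def gbasic_def ..

lemma mem_gbasic_iff:
  "(x, q, y) \<in> gbasic P L m n U V \<longleftrightarrow> q = m - n \<and> (x, q, y) \<in> groupoid P L \<and> x \<in> U \<and> y \<in> V \<and>
     indom L x m \<and> indom L y n \<and> shift L x m = shift L y n"
  unfolding gbasic_def by auto

lemma Zset_eq_gbasic:
  fixes P :: "'q::group_add set" and L :: "('a, 'o, 'q) pgraph"
  shows "Zset P L mu J nu K = gbasic P L (deg L mu) (deg L nu)
     {x \<in> pathsp L. {mu} \<subseteq> x \<and> x \<inter> J = {}} {y \<in> pathsp L. {nu} \<subseteq> y \<and> y \<inter> K = {}}"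
proof (intro set_eqI)
  fix t :: "'a set \<times> 'q \<times> 'a set"
  obtain x q y where t: "t = (x, q, y)"
    by (cases t)
  show "t \<in> Zset P L mu J nu K \<longleftrightarrow> t \<in> gbasic P L (deg L mu) (deg L nu)
     {x \<in> pathsp L. {mu} \<subseteq> x \<and> x \<inter> J = {}} {y \<in> pathsp L. {nu} \<subseteq> y \<and> y \<inter> K = {}}"
    unfolding t mem_Zset_iff mem_gbasic_iff indom_def using groupoid_paths[of x q y P L] by auto
qed

lemma Zset_comp_subset_gbasic:
  assumes G: "is_pgraph P L" and "mu \<in> Mor L" "nu \<in> Mor L"
    and a: "a \<in> Mor L" "src L mu = rng L a" "src L nu = rng L a"
    and U: "\<And>x. x \<in> pathsp L \<Longrightarrow> K1 \<subseteq> x \<Longrightarrow> x \<inter> J = {} \<Longrightarrow> x \<in> U"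
    and V: "\<And>y. y \<in> pathsp L \<Longrightarrow> K1' \<subseteq> y \<Longrightarrow> y \<inter> K = {} \<Longrightarrow> y \<in> V"
    and "\<forall>f\<in>K1. prec L f (comp L mu a)" "\<forall>f\<in>K1'. prec L f (comp L nu a)"
  shows "Zset P L (comp L mu a) J (comp L nu a) K \<subseteq> gbasic P L (deg L mu) (deg L nu) U V"
proof clarify
  fix x q y
  assume Z: "(x, q, y) \<in> Zset P L (comp L mu a) J (comp L nu a) K"
  then have "(x, q, y) \<in> Zset P L mu {} nu {}"
    using Zset_comp_subset[OF G assms(2,3) a, of "{}" J "{}" K] by blast
  then have z0: "q = deg L mu - deg L nu" "(x, q, y) \<in> groupoid P L" "mu \<in> x" "nu \<in> y"
    "shift L x (deg L mu) = shift L y (deg L nu)"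
    unfolding mem_Zset_iff by blast+
  have z: "comp L mu a \<in> x" "x \<inter> J = {}" "comp L nu a \<in> y" "y \<inter> K = {}"
    using Z unfolding mem_Zset_iff by blast+
  have F: "is_filter L x" "is_filter L y"
    using groupoid_filters[OF z0(2)] by simp_all
  have "K1 \<subseteq> x" "K1' \<subseteq> y"
    using filter_hereditary[OF F(1) z(1)] filter_hereditary[OF F(2) z(3)] assms(9,10) by blast+
  then have "x \<in> U" "y \<in> V"
    using U V groupoid_paths[OF z0(2)] z(2,4) by simp_all
  moreover have "indom L x (deg L mu)" "indom L y (deg L nu)"
    unfolding indom_def using z0(3,4) by blast+
  ultimately show "(x, q, y) \<in> gbasic P L (deg L mu) (deg L nu) U V"
    unfolding mem_gbasic_iff using z0 by blast
qed

lemma gbasic_local_Zset: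
  assumes G: "is_pgraph P L" and "openin (pathtop L) U" "openin (pathtop L) V"
    and g: "(x, q, y) \<in> gbasic P L m n U V"
  obtains mu nu J K where "mu \<in> FA L" "nu \<in> FA L" "finite J" "J \<subseteq> Mor L" "finite K" "K \<subseteq> Mor L"
    "(x, q, y) \<in> Zset P L mu J nu K" "Zset P L mu J nu K \<subseteq> gbasic P L m n U V"
proof -
  have g': "q = m - n" "(x, q, y) \<in> groupoid P L" "x \<in> U" "y \<in> V" "indom L x m" "indom L y n"
    "shift L x m = shift L y n"
    using g unfolding mem_gbasic_iff by blast+
  have "x \<in> pathsp L" "y \<in> pathsp L"
    using groupoid_paths[OF g'(2)] by simp_all
  then obtain fx fy where fx: "fx \<in> x" "fx \<in> FA L" and fy: "fy \<in> y" "fy \<in> FA L"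
    and F: "is_filter L x" "is_filter L y"
    unfolding pathsp_def by blast
  obtain sx sy where sx: "sx \<in> x" "deg L sx = m" and sy: "sy \<in> y" "deg L sy = n"
    using g'(5,6) unfolding indom_def by blast
  have M: "sx \<in> Mor L" "sy \<in> Mor L"
    using filter_Mor[OF F(1) sx(1)] filter_Mor[OF F(2) sy(1)] by simp_all
  have sh: "shift L x (deg L sx) = shift L y (deg L sy)"
    using g'(7) sx(2) sy(2) by simp
  obtain K1 J where K1: "finite K1" "K1 \<subseteq> x" and J: "finite J" "J \<subseteq> Mor L" "x \<inter> J = {}"
    and U: "\<And>x'. x' \<in> pathsp L \<Longrightarrow> K1 \<subseteq> x' \<Longrightarrow> x' \<inter> J = {} \<Longrightarrow> x' \<in> U"
    using openin_pathtop_local_cylinder[OF assms(2) g'(3)] by blast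
  obtain K1' K where K1': "finite K1'" "K1' \<subseteq> y" and K: "finite K" "K \<subseteq> Mor L" "y \<inter> K = {}"
    and V: "\<And>y'. y' \<in> pathsp L \<Longrightarrow> K1' \<subseteq> y' \<Longrightarrow> y' \<inter> K = {} \<Longrightarrow> y' \<in> V"
    using openin_pathtop_local_cylinder[OF assms(3) g'(4)] by blast
  obtain a where a: "a \<in> shift L x (deg L sx)"
    and ext_x: "\<forall>f\<in>insert fx K1. prec L f (comp L sx a)"
    and ext_y: "\<forall>f\<in>insert fy K1'. prec L f (comp L sy a)"
    using shift_eq_common_extension[OF G F sx(1) sy(1) sh, of "insert fx K1" "insert fy K1'"]
      fx(1) fy(1) K1 K1' by blast
  have "a \<in> shift L y (deg L sy)"
    using a sh by simp
  then have a': "a \<in> Mor L" "src L sx = rng L a" "comp L sx a \<in> x" "src L sy = rng L a" "comp L sy a \<in> y"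
    using a mem_shift_iff[OF G F(1) sx(1)] mem_shift_iff[OF G F(2) sy(1)] by simp_all
  have "(x, q, y) \<in> Zset P L sx {} sy {}"
    unfolding mem_Zset_iff using g'(1,2) sx sy sh by simp
  show ?thesis
  proof (rule that)
    show "comp L sx a \<in> FA L" "comp L sy a \<in> FA L"
      using FA_prec_closed[OF G fx(2)] FA_prec_closed[OF G fy(2)] ext_x ext_y by simp_all
    show "(x, q, y) \<in> Zset P L (comp L sx a) J (comp L sy a) K"
      using mem_Zset_comp[OF G \<open>(x, q, y) \<in> Zset P L sx {} sy {}\<close> a'(1,2,4,3,5) J(3) K(3)] .
    show "Zset P L (comp L sx a) J (comp L sy a) K \<subseteq> gbasic P L m n U V"
      using Zset_comp_subset_gbasic[OF G M a'(1,2,4) U V] ext_x ext_y sx(2) sy(2) by simp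
  qed (use J K in simp_all)
qed

lemma Zsets_subset_gbasics:
  assumes G: "is_pgraph P L"
  shows "Zsets P L \<subseteq> gbasics P L"
proof
  fix Z
  assume "Z \<in> Zsets P L"
  then obtain mu nu J K where Z: "Z = Zset P L mu J nu K" "mu \<in> FA L" "nu \<in> FA L"
    "finite J" "J \<subseteq> Mor L" "finite K" "K \<subseteq> Mor L"
    unfolding Zsets_def by blast
  have "mu \<in> Mor L" "nu \<in> Mor L"
    using Z(2,3) FA_subset_Mor[of L] by auto
  then have "openin (pathtop L) {x \<in> pathsp L. {mu} \<subseteq> x \<and> x \<inter> J = {}}"
    "openin (pathtop L) {y \<in> pathsp L. {nu} \<subseteq> y \<and> y \<inter> K = {}}"
    "deg L mu \<in> P" "deg L nu \<in> P"
    using openin_pathtop_cylinder[of "{mu}" L J] openin_pathtop_cylinder[of "{nu}" L K]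
      Z(4-7) pgraph_deg_in[OF G] by simp_all
  then show "Z \<in> gbasics P L"
    unfolding Z(1) Zset_eq_gbasic gbasics_def by blast
qed

lemma gbasics_local_Zsets:
  assumes G: "is_pgraph P L" and "S \<in> gbasics P L" "g \<in> S"
  shows "\<exists>Z\<in>Zsets P L. g \<in> Z \<and> Z \<subseteq> S"
proof -
  obtain m n U V where S: "S = gbasic P L m n U V" "openin (pathtop L) U" "openin (pathtop L) V"
    using \<open>S \<in> gbasics P L\<close> unfolding gbasics_def by blast
  obtain x q y where g: "g = (x, q, y)"
    by (cases g)
  obtain mu nu J K where "mu \<in> FA L" "nu \<in> FA L" "finite J" "J \<subseteq> Mor L" "finite K" "K \<subseteq> Mor L"
    "g \<in> Zset P L mu J nu K" "Zset P L mu J nu K \<subseteq> S"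
    using gbasic_local_Zset[OF G S(2,3), of x q y m n] \<open>g \<in> S\<close> S(1) g by blast
  then show ?thesis
    unfolding Zsets_def by blast
qed

lemma Zsets_Int_local:
  assumes G: "is_pgraph P L" and "Z1 \<in> Zsets P L" "Z2 \<in> Zsets P L" "g \<in> Z1" "g \<in> Z2"
  shows "\<exists>Z\<in>Zsets P L. g \<in> Z \<and> Z \<subseteq> Z1 \<inter> Z2"
proof -
  obtain mu1 nu1 J1 K1 where Z1: "Z1 = Zset P L mu1 J1 nu1 K1" "mu1 \<in> FA L" "nu1 \<in> FA L"
    "finite J1" "J1 \<subseteq> Mor L" "finite K1" "K1 \<subseteq> Mor L"
    using \<open>Z1 \<in> Zsets P L\<close> unfolding Zsets_def by blast
  obtain mu2 nu2 J2 K2 where Z2: "Z2 = Zset P L mu2 J2 nu2 K2"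
    "finite J2" "J2 \<subseteq> Mor L" "finite K2" "K2 \<subseteq> Mor L"
    using \<open>Z2 \<in> Zsets P L\<close> unfolding Zsets_def by blast
  obtain x q y where g: "g = (x, q, y)"
    by (cases g)
  have "(x, q, y) \<in> Zset P L mu1 J1 nu1 K1" "(x, q, y) \<in> Zset P L mu2 J2 nu2 K2"
    using assms(4,5) Z1(1) Z2(1) g by simp_all
  from Zset_Int_refine[OF G this Z1(2,3)]
  obtain mu nu where Z: "mu \<in> FA L" "nu \<in> FA L" "(x, q, y) \<in> Zset P L mu (J1 \<union> J2) nu (K1 \<union> K2)"
    "Zset P L mu (J1 \<union> J2) nu (K1 \<union> K2) \<subseteq> Zset P L mu1 J1 nu1 K1 \<inter> Zset P L mu2 J2 nu2 K2" .
  show ?thesis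
  proof (rule bexI)
    show "Zset P L mu (J1 \<union> J2) nu (K1 \<union> K2) \<in> Zsets P L"
      using Z(1,2) Z1(4-7) Z2(2-5) by (intro Zset_in_Zsets) simp_all
    show "g \<in> Zset P L mu (J1 \<union> J2) nu (K1 \<union> K2) \<and> Zset P L mu (J1 \<union> J2) nu (K1 \<union> K2) \<subseteq> Z1 \<inter> Z2"
      unfolding g Z1(1) Z2(1) by (intro conjI Z(3) Z(4))
  qed
qed

theorem proposition5p23:
  fixes P :: "'q::group_add set" and L :: "('a, 'o, 'q) pgraph"
  assumes "wqlo P" and "is_pgraph P L" and "FA L \<noteq> {}"
  shows "is_basis_for (gtop P L)
           {Zset P L mu J nu K | mu J nu K. mu \<in> FA L \<and> nu \<in> FA L \<and>
              finite J \<and> J \<subseteq> Mor L \<and> finite K \<and> K \<subseteq> Mor L}"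
proof -
  have "is_basis_for (topology_generated_by (gbasics P L)) (Zsets P L)"
  proof (rule is_basis_for_topology_generated_by)
    show "openin (topology_generated_by (gbasics P L)) Z" if "Z \<in> Zsets P L" for Z
      using Zsets_subset_gbasics[OF assms(2)] that by (intro topology_generated_by_Basis) blast
    show "\<exists>Z\<in>Zsets P L. g \<in> Z \<and> Z \<subseteq> S" if "S \<in> gbasics P L" "g \<in> S" for S g
      using gbasics_local_Zsets[OF assms(2) that] .
    show "\<exists>Z\<in>Zsets P L. g \<in> Z \<and> Z \<subseteq> Z1 \<inter> Z2"
      if "Z1 \<in> Zsets P L" "Z2 \<in> Zsets P L" "g \<in> Z1" "g \<in> Z2" for Z1 Z2 g
      using Zsets_Int_local[OF assms(2) that] .
  qed
  then show ?thesis
    unfolding gtop_gbasics Zsets_def .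
qed

end
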